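(* Given that the cardinality of $\mathcal{F}_{\lambda}$ is $\ell$, the expected length of the chosen largest gap (CLG) on wavelength $\lambda$ is bounded by \[ \Lambda\cdot g\left(\ell,\eta-1\right)\leq \mathbb{E}^{\ell}\left(\left|CLG_{\lambda}\right|\right)\leq \Lambda\cdot g\left(\ell,\eta+1\right), \] where $g\left(l,N\right)$ denotes the expected length of the CLG for a single wavelength ring with $N$ nodes, when the active set is chosen uniformly at random from all subsets of $\left\{ 1,\ldots,N\right\}$ with cardinality $\left(l+1\right)$.
   Context: Consider a bidirectional WDM packet ring with $N$ nodes $1,\ldots,N$ (indexed clockwise, modulo $N$) and $\Lambda$ wavelengths in each direction, with $\eta:=N/\Lambda$ an integer. Each node receives on one wavelength: the nodes $\mathcal{M}_{\lambda}:=\{\lambda+k\Lambda : k=0,\ldots,\eta-1\}$ share drop wavelength $\lambda$. A packet has a sender $S$ and a random fanout (destination) set $\mathcal{F}\subset\{1,\ldots,N\}\setminus\{S\}$; for a given wavelength $\lambda$, $\mathcal{F}_{\lambda}:=\mathcal{F}\cap\mathcal{M}_{\lambda}$ is the set of destinations with drop wavelength $\lambda$, and $\mathcal{A}_{\lambda}:=\mathcal{F}_{\lambda}\cup\{S\}$ is the set of active nodes on $\lambda$. Ordering the active nodes as $X_{\lambda,1}<\cdots<X_{\lambda,\ell+1}$, the gaps are $X_{\lambda,1}+(N-X_{\lambda,\ell+1}),\,X_{\lambda,2}-X_{\lambda,1},\ldots,X_{\lambda,\ell+1}-X_{\lambda,\ell}$; the chosen largest gap $CLG_{\lambda}$ is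 a largest of these gaps (ties broken uniformly at random), which under shortest path routing is the portion of the ring not traversed. The destinations on $\lambda$ are (conditionally on their number) uniformly distributed among the admissible nodes of $\mathcal{M}_{\lambda}$, and $\mathbb{E}^{\ell}$ denotes expectation conditioned on $|\mathcal{F}_{\lambda}|=\ell$. *)

theory Defs
  imports Complex_Main
begin

definition gaps :: "nat \<Rightarrow> nat set \<Rightarrow> nat list" where
  "gaps N A = (let xs = sorted_list_of_set A in
     (hd xs + (N - last xs)) # map (\<lambda>i. xs ! Suc i - xs ! i) [0..<length xs - 1])"

text \<open>Length of the chosen largest gap (a largest gap; tie-breaking does not affect the length).\<close>
definition clg_length :: "nat \<Rightarrow> nat set \<Rightarrow> nat" where
  "clg_length N A = Max (set (gaps N A))"

definition uniform_avg :: "'a set \<Rightarrow> ('a \<Rightarrow> real) \<Rightarrow> real" where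
  "uniform_avg X f = (\<Sum>x\<in>X. f x) / real (card X)"

definition g :: "nat \<Rightarrow> nat \<Rightarrow> real" where
  "g l N = uniform_avg {A. A \<subseteq> {1..N} \<and> card A = l + 1} (\<lambda>A. real (clg_length N A))"

definition drop_set :: "nat \<Rightarrow> nat \<Rightarrow> nat \<Rightarrow> nat set" where
  "drop_set Lam eta lam = {lam + k * Lam | k. k < eta}"

text \<open>E^l(|CLG_lam|): destinations F_lam uniform among the l-subsets of the admissible nodes
  M_lam - {S}; active set F_lam \<union> {S}.\<close>
definition cond_exp_clg :: "nat \<Rightarrow> nat \<Rightarrow> nat \<Rightarrow> nat \<Rightarrow> nat \<Rightarrow> real" where
  "cond_exp_clg Lam eta lam S l =
     uniform_avg {F. F \<subseteq> drop_set Lam eta lam - {S} \<and> card F = l}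
       (\<lambda>F. real (clg_length (eta * Lam) (insert S F)))"

end

theory Submission
  imports Defs
begin

text \<open>Rotating the ring so that the sender becomes node \<open>N\<close> and cutting it open there, the chosen
  largest gap becomes the largest gap of a set of points on a line with end points \<open>0\<close> and \<open>N\<close>; by
  rotation symmetry the same description holds for \<open>g(l, n)\<close>, with the points a uniform
  \<open>l\<close>-subset of \<open>{1..n-1}\<close>. After the rotation the nodes of the wavelength form a progression
  \<open>r, r + \<Lambda>, \<dots>\<close> of step \<open>\<Lambda>\<close>. For \<open>r = 0\<close> one gets exactly \<open>\<Lambda> g(l, \<eta>)\<close>. Otherwise number the
  progression \<open>1, \<dots>, \<eta>\<close> and send the end points \<open>0, N\<close> to \<open>0, \<eta> + 1\<close> (resp. to \<open>1, \<eta>\<close>): every gap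
  is at most (resp. at least) \<open>\<Lambda>\<close> times the corresponding gap of the image. The first image is the
  picture for \<open>g(l, \<eta> + 1)\<close>; in the second, discarding the random points that fall on the end
  points \<open>1, \<eta>\<close> leads to \<open>g(l, \<eta> - 1)\<close>. Discarding points only enlarges the largest gap on average,
  because averages of an antitone set function over \<open>k\<close>-subsets decrease in \<open>k\<close>; this also makes
  \<open>g\<close> monotone in the ring size.\<close>

section \<open>Largest gaps of finite sets of naturals\<close>

definition adjacent_in :: "nat set \<Rightarrow> nat \<Rightarrow> nat \<Rightarrow> bool" where
  "adjacent_in T x y \<longleftrightarrow> x \<in> T \<and> y \<in> T \<and> x < y \<and> (\<forall>z\<in>T. \<not> (x < z \<and> z < y))"

definition consecutive_gaps :: "nat set \<Rightarrow> nat set" where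
  "consecutive_gaps T = {y - x | x y. adjacent_in T x y}"

definition max_gap :: "nat set \<Rightarrow> nat" where
  "max_gap T = Max (consecutive_gaps T)"

lemma adjacent_in_cases:
  assumes "adjacent_in T x y" "z \<in> T"
  shows "z \<le> x \<or> y \<le> z"
  using assms unfolding adjacent_in_def by (meson not_less)

lemma finite_consecutive_gaps: "finite T \<Longrightarrow> finite (consecutive_gaps T)"
proof -
  assume "finite T"
  have "consecutive_gaps T \<subseteq> (\<lambda>(x, y). y - x) ` (T \<times> T)"
    unfolding consecutive_gaps_def adjacent_in_def by auto
  with \<open>finite T\<close> show ?thesis by (auto intro: finite_subset)
qed

lemma adjacent_in_cut:
  assumes "finite T" "a \<in> T" "b \<in> T" "P a" "\<not> P b"
    and down: "\<And>x y. x \<in> T \<Longrightarrow> y \<in> T \<Longrightarrow> x \<le> y \<Longrightarrow> P y \<Longrightarrow> P x"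
  obtains x y where "adjacent_in T x y" "P x" "\<not> P y"
proof -
  let ?L = "{t\<in>T. P t}" and ?R = "{t\<in>T. \<not> P t}"
  have L: "finite ?L" "?L \<noteq> {}" and R: "finite ?R" "?R \<noteq> {}" using assms by auto
  define x where "x = Max ?L"
  define y where "y = Min ?R"
  have x: "x \<in> T" "P x" using Max_in[OF L] x_def by auto
  have y: "y \<in> T" "\<not> P y" using Min_in[OF R] y_def by auto
  have "x < y" using down[OF y(1) x(1)] x(2) y(2) by (meson not_less)
  moreover have "\<not> (x < z \<and> z < y)" if "z \<in> T" for z
  proof (cases "P z")
    case True thus ?thesis using Max_ge[OF L(1), of z] that unfolding x_def by auto
  next
    case False thus ?thesis using Min_le[OF R(1), of z] that unfolding y_def by auto
  qed
  ultimately have "adjacent_in T x y" using x y unfolding adjacent_in_def by blast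
  with x y that show ?thesis by blast
qed

lemma max_gap_ge:
  assumes "finite T" "adjacent_in T x y"
  shows "y - x \<le> max_gap T"
  unfolding max_gap_def
  by (rule Max_ge[OF finite_consecutive_gaps[OF assms(1)]])
    (use assms(2) in \<open>auto simp: consecutive_gaps_def\<close>)

lemma max_gap_attained:
  assumes "finite T" "x \<in> T" "y \<in> T" "x < y"
  obtains a b where "adjacent_in T a b" "max_gap T = b - a"
proof -
  obtain a b where "adjacent_in T a b"
    by (rule adjacent_in_cut[of T x y "\<lambda>t. t \<le> x"]) (use assms in auto)
  hence "consecutive_gaps T \<noteq> {}" unfolding consecutive_gaps_def by blast
  hence "max_gap T \<in> consecutive_gaps T"
    unfolding max_gap_def using finite_consecutive_gaps[OF assms(1)] by (rule Max_in[rotated])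
  with that show ?thesis unfolding consecutive_gaps_def by blast
qed

lemma max_gap_le_mult_image:
  assumes "finite T" "x0 \<in> T" "y0 \<in> T" "x0 < y0"
    and stretch: "\<And>x y. x \<in> T \<Longrightarrow> y \<in> T \<Longrightarrow> x < y \<Longrightarrow> \<sigma> x < \<sigma> y \<and> y - x \<le> c * (\<sigma> y - \<sigma> x)"
  shows "max_gap T \<le> c * max_gap (\<sigma> ` T)"
proof -
  obtain a b where ab: "adjacent_in T a b" "max_gap T = b - a"
    using max_gap_attained assms(1-4) by blast
  have a: "a \<in> T" and b: "b \<in> T" and "a < b" using ab(1) unfolding adjacent_in_def by auto
  have mono: "\<sigma> x \<le> \<sigma> y" if "x \<in> T" "y \<in> T" "x \<le> y" for x y
    using stretch[OF that(1,2)] that(3) by (cases "x = y") auto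
  have "adjacent_in (\<sigma> ` T) (\<sigma> a) (\<sigma> b)"
    unfolding adjacent_in_def
  proof (intro conjI ballI)
    show "\<sigma> a \<in> \<sigma> ` T" "\<sigma> b \<in> \<sigma> ` T" "\<sigma> a < \<sigma> b" using a b \<open>a < b\<close> stretch by auto
    fix w assume "w \<in> \<sigma> ` T"
    then obtain z where z: "z \<in> T" "w = \<sigma> z" by blast
    from adjacent_in_cases[OF ab(1) z(1)] show "\<not> (\<sigma> a < w \<and> w < \<sigma> b)"
    proof
      assume "z \<le> a" thus ?thesis using mono[OF z(1) a] z(2) by simp
    next
      assume "b \<le> z" thus ?thesis using mono[OF b z(1)] z(2) by simp
    qed
  qed
  hence "c * (\<sigma> b - \<sigma> a) \<le> c * max_gap (\<sigma> ` T)" using assms(1) max_gap_ge by simp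
  moreover have "b - a \<le> c * (\<sigma> b - \<sigma> a)" using stretch a b \<open>a < b\<close> by blast
  ultimately show ?thesis using ab(2) by linarith
qed

lemma mult_max_gap_image_le:
  assumes "finite T" "p0 \<in> \<sigma> ` T" "q0 \<in> \<sigma> ` T" "p0 < q0"
    and mono: "\<And>x y. x \<in> T \<Longrightarrow> y \<in> T \<Longrightarrow> x \<le> y \<Longrightarrow> \<sigma> x \<le> \<sigma> y"
    and shrink: "\<And>x y. x \<in> T \<Longrightarrow> y \<in> T \<Longrightarrow> x < y \<Longrightarrow> c * (\<sigma> y - \<sigma> x) \<le> y - x"
  shows "c * max_gap (\<sigma> ` T) \<le> max_gap T"
proof -
  have "finite (\<sigma> ` T)" using assms(1) by simp
  then obtain p q where pq: "adjacent_in (\<sigma> ` T) p q" "max_gap (\<sigma> ` T) = q - p"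
    using max_gap_attained assms(2-4) by blast
  obtain s t where st: "s \<in> T" "\<sigma> s = p" "t \<in> T" "\<sigma> t = q" "p < q"
    using pq(1) unfolding adjacent_in_def by blast
  have down: "\<sigma> x \<le> p" if "x \<in> T" "y \<in> T" "x \<le> y" "\<sigma> y \<le> p" for x y
    using mono[OF that(1-3)] that(4) by linarith
  obtain a b where ab: "adjacent_in T a b" "\<sigma> a \<le> p" "\<not> \<sigma> b \<le> p"
    by (rule adjacent_in_cut[of T s t "\<lambda>z. \<sigma> z \<le> p"]) (use assms(1) st down in auto)
  have "\<sigma> b \<in> \<sigma> ` T" using ab(1) unfolding adjacent_in_def by blast
  hence "q \<le> \<sigma> b" using adjacent_in_cases[OF pq(1)] ab(3) by blast
  hence "c * (q - p) \<le> c * (\<sigma> b - \<sigma> a)" using ab(2) by (intro mult_le_mono2) linarith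
  also have "\<dots> \<le> b - a" using shrink ab(1) unfolding adjacent_in_def by blast
  also have "\<dots> \<le> max_gap T" using max_gap_ge assms(1) ab(1) .
  finally show ?thesis using pq(2) by simp
qed

lemma max_gap_le_mult_image_offset:
  assumes "finite T" "x0 \<in> T" "y0 \<in> T" "x0 < y0"
    and scale: "\<And>z. z \<in> T \<Longrightarrow> c * \<sigma> z = z + e z"
    and mono: "\<And>x y. x \<in> T \<Longrightarrow> y \<in> T \<Longrightarrow> x \<le> y \<Longrightarrow> e x \<le> e y"
  shows "max_gap T \<le> c * max_gap (\<sigma> ` T)"
proof (rule max_gap_le_mult_image[OF assms(1-4)])
  fix x y assume xy: "x \<in> T" "y \<in> T" "x < y"
  have "c * \<sigma> x < c * \<sigma> y"
    using scale[OF xy(1)] scale[OF xy(2)] mono[OF xy(1,2) less_imp_le[OF xy(3)]] xy(3) by linarith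
  hence "\<sigma> x < \<sigma> y" by (simp add: mult_less_cancel1)
  moreover have "y - x \<le> c * (\<sigma> y - \<sigma> x)"
    using scale[OF xy(1)] scale[OF xy(2)] mono[OF xy(1,2) less_imp_le[OF xy(3)]]
    by (simp add: diff_mult_distrib2)
  ultimately show "\<sigma> x < \<sigma> y \<and> y - x \<le> c * (\<sigma> y - \<sigma> x)" by simp
qed

lemma mult_max_gap_image_le_offset:
  assumes "finite T" "p0 \<in> \<sigma> ` T" "q0 \<in> \<sigma> ` T" "p0 < q0"
    and mono: "\<And>x y. x \<in> T \<Longrightarrow> y \<in> T \<Longrightarrow> x \<le> y \<Longrightarrow> \<sigma> x \<le> \<sigma> y"
    and scale: "\<And>z. z \<in> T \<Longrightarrow> c * \<sigma> z = z + e z"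
    and antimono: "\<And>x y. x \<in> T \<Longrightarrow> y \<in> T \<Longrightarrow> x \<le> y \<Longrightarrow> e y \<le> e x"
  shows "c * max_gap (\<sigma> ` T) \<le> max_gap T"
proof (rule mult_max_gap_image_le[OF assms(1-4) mono])
  fix x y assume xy: "x \<in> T" "y \<in> T" "x < y"
  thus "c * (\<sigma> y - \<sigma> x) \<le> y - x"
    using scale[OF xy(1)] scale[OF xy(2)] antimono[OF xy(1,2)] by (simp add: diff_mult_distrib2)
qed

lemma max_gap_le_of_subset:
  assumes "finite T'" "T \<subseteq> T'" "x0 \<in> T" "y0 \<in> T" "x0 < y0"
    and between: "\<And>z. z \<in> T' \<Longrightarrow> \<exists>a\<in>T. \<exists>b\<in>T. a \<le> z \<and> z \<le> b"
  shows "max_gap T' \<le> max_gap T"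
proof -
  have "finite T" using assms(1,2) finite_subset by blast
  obtain x y where xy: "adjacent_in T' x y" "max_gap T' = y - x"
    using max_gap_attained[of T' x0 y0] assms by blast
  obtain a' b' where a'b': "a' \<in> T" "a' \<le> x" "b' \<in> T" "y \<le> b'"
    using between xy(1) unfolding adjacent_in_def by blast
  have "\<not> b' \<le> x" using a'b' xy(1) unfolding adjacent_in_def by linarith
  obtain a b where ab: "adjacent_in T a b" "a \<le> x" "\<not> b \<le> x"
    by (rule adjacent_in_cut[of T a' b' "\<lambda>t. t \<le> x"]) (use \<open>finite T\<close> a'b' \<open>\<not> b' \<le> x\<close> in auto)
  have "b \<in> T'" using ab(1) assms(2) unfolding adjacent_in_def by blast
  hence "y \<le> b" using adjacent_in_cases[OF xy(1)] ab(3) by blast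
  hence "y - x \<le> b - a" using ab(2) by simp
  also have "\<dots> \<le> max_gap T" using max_gap_ge \<open>finite T\<close> ab(1) .
  finally show ?thesis using xy(2) by simp
qed

lemma max_gap_insert_ends_antimono:
  assumes "a < b" "K \<subseteq> K'" "K' \<subseteq> {a..b}"
  shows "max_gap (insert a (insert b K')) \<le> max_gap (insert a (insert b K))"
proof (rule max_gap_le_of_subset[of _ _ a b])
  show "finite (insert a (insert b K'))" using assms(3) finite_subset by auto
qed (use assms in auto)

lemma max_gap_image_mult:
  assumes "c > 0" "finite T" "a \<in> T" "b \<in> T" "a < b"
  shows "max_gap ((\<lambda>x. x * c) ` T) = c * max_gap T"
proof -
  have unscale: "(\<lambda>x. x div c) ` (\<lambda>x. x * c) ` T = T" using assms(1) by (auto simp: image_comp)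
  have scaled: "x * c < y * c \<and> y * c - x * c = c * (y - x)" if "x < y" for x y
    using that assms(1) by (simp add: diff_mult_distrib2 mult.commute)
  have "c * max_gap T \<le> max_gap ((\<lambda>x. x * c) ` T)"
  proof -
    have "c * max_gap ((\<lambda>x. x div c) ` (\<lambda>x. x * c) ` T) \<le> max_gap ((\<lambda>x. x * c) ` T)"
      by (rule mult_max_gap_image_le[of _ a _ b]) (use assms unscale scaled in \<open>auto simp: div_le_mono\<close>)
    thus ?thesis unfolding unscale .
  qed
  moreover have "max_gap ((\<lambda>x. x * c) ` T) \<le> c * max_gap T"
  proof -
    have "max_gap ((\<lambda>x. x * c) ` T) \<le> c * max_gap ((\<lambda>x. x div c) ` (\<lambda>x. x * c) ` T)"
      by (rule max_gap_le_mult_image[of _ "a * c" "b * c"]) (use assms scaled in auto)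
    thus ?thesis unfolding unscale .
  qed
  ultimately show ?thesis by simp
qed

lemma max_gap_image_add:
  assumes "finite T" "a \<in> T" "b \<in> T" "a < b"
  shows "max_gap ((\<lambda>x. x + d) ` T) = max_gap T"
proof -
  have "max_gap T \<le> 1 * max_gap ((\<lambda>x. x + d) ` T)"
    by (rule max_gap_le_mult_image[OF assms]) auto
  moreover have "1 * max_gap ((\<lambda>x. x + d) ` T) \<le> max_gap T"
    by (rule mult_max_gap_image_le[of _ "a + d" _ "b + d"]) (use assms in auto)
  ultimately show ?thesis by simp
qed

section \<open>Ring gaps as gaps on a line\<close>

fun successive_diffs :: "nat list \<Rightarrow> nat list" where
  "successive_diffs (x # y # zs) = (y - x) # successive_diffs (y # zs)"
| "successive_diffs _ = []"

lemma map_nth_diffs_eq_successive_diffs: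
  "map (\<lambda>i. xs ! Suc i - xs ! i) [0..<length xs - 1] = successive_diffs xs"
proof (induction xs rule: successive_diffs.induct)
  case (1 x y zs)
  have "[0..<length (x # y # zs) - 1] = [0..<Suc (length zs)]" by simp
  then show ?case using 1 by (simp only: map_upt_Suc) simp
qed auto

lemma successive_diffs_map_Suc: "successive_diffs (map Suc xs) = successive_diffs xs"
  by (induction xs rule: successive_diffs.induct) auto

lemma successive_diffs_snoc:
  "ys \<noteq> [] \<Longrightarrow> successive_diffs (ys @ [z]) = successive_diffs ys @ [z - last ys]"
  by (induction ys rule: successive_diffs.induct) auto

lemma gaps_sorted:
  "sorted_wrt (<) xs \<Longrightarrow> gaps n (set xs) = (hd xs + (n - last xs)) # successive_diffs xs"
  using map_nth_diffs_eq_successive_diffs[of xs]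
  by (simp add: gaps_def sorted_list_of_set_sort_remdups strict_sorted_iff distinct_remdups_id
      sorted_sort_id)

lemma consecutive_gaps_insert_below:
  assumes "y \<in> T" "\<forall>z\<in>T. y \<le> z" "x < y"
  shows "consecutive_gaps (insert x T) = insert (y - x) (consecutive_gaps T)"
proof -
  have "adjacent_in (insert x T) a b \<longleftrightarrow> (a = x \<and> b = y) \<or> adjacent_in T a b" for a b
  proof
    assume ab: "adjacent_in (insert x T) a b"
    show "(a = x \<and> b = y) \<or> adjacent_in T a b"
    proof (cases "a = x")
      case True
      hence "b \<in> T" "x < b" using ab unfolding adjacent_in_def by auto
      hence "b = y" using adjacent_in_cases[OF ab, of y] assms True by force
      thus ?thesis using True by simp
    next
      case False
      thus ?thesis using ab assms unfolding adjacent_in_def by auto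
    qed
  qed (use assms in \<open>auto simp: adjacent_in_def\<close>)
  thus ?thesis unfolding consecutive_gaps_def by auto
qed

lemma set_successive_diffs:
  "sorted_wrt (<) ys \<Longrightarrow> set (successive_diffs ys) = consecutive_gaps (set ys)"
proof (induction ys rule: successive_diffs.induct)
  case (1 x y zs)
  have "consecutive_gaps (insert x (set (y # zs))) = insert (y - x) (consecutive_gaps (set (y # zs)))"
    using "1.prems" by (intro consecutive_gaps_insert_below) auto
  then show ?case using 1 by simp
qed (auto simp: consecutive_gaps_def adjacent_in_def)

lemma obtain_sorted_list:
  fixes A :: "'a::linorder set"
  assumes "finite A"
  obtains xs where "sorted_wrt (<) xs" "set xs = A"
  using that[OF strict_sorted_list_of_set set_sorted_list_of_set[OF assms]] .

lemma clg_length_insert_eq_max_gap: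
  assumes "n \<ge> 1" "J \<subseteq> {1..<n}"
  shows "clg_length n (insert n J) = max_gap (insert 0 (insert n J))"
proof -
  obtain ys where ys: "sorted_wrt (<) ys" "set ys = J"
    using obtain_sorted_list[OF finite_subset[OF assms(2)]] by blast
  define xs where "xs = ys @ [n]"
  have xs: "sorted_wrt (<) xs" "set xs = insert n J" "last xs = n"
    using ys assms unfolding xs_def by (auto simp: sorted_wrt_append)
  have "sorted_wrt (<) (0 # xs)" using xs assms by auto
  moreover have "gaps n (insert n J) = successive_diffs (0 # xs)"
    unfolding xs(2)[symmetric] gaps_sorted[OF xs(1)] xs(3) unfolding xs_def by (cases ys) auto
  ultimately have "set (gaps n (insert n J)) = consecutive_gaps (insert 0 (insert n J))"
    using set_successive_diffs xs(2) by simp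
  thus ?thesis unfolding clg_length_def max_gap_def by simp
qed

definition rotate_ring :: "nat \<Rightarrow> nat \<Rightarrow> nat" where
  "rotate_ring n x = (if x < n then Suc x else 1)"

lemma bij_betw_rotate_ring: "n \<ge> 1 \<Longrightarrow> bij_betw (rotate_ring n) {1..n} {1..n}"
proof -
  assume "n \<ge> 1"
  have "inj_on (rotate_ring n) {1..n}" unfolding inj_on_def rotate_ring_def by auto
  moreover have "rotate_ring n ` {1..n} \<subseteq> {1..n}" unfolding rotate_ring_def using \<open>n \<ge> 1\<close> by auto
  ultimately show ?thesis by (simp add: bij_betw_def endo_inj_surj)
qed

lemma gaps_rotate_ring_without_last:
  assumes "sorted_wrt (<) xs" "xs \<noteq> []" "last xs < n"
  shows "gaps n (set (map Suc xs)) = gaps n (set xs)"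
  using assms gaps_sorted[of "map Suc xs"]
  by (simp add: gaps_sorted sorted_wrt_map successive_diffs_map_Suc hd_map last_map)

lemma set_gaps_rotate_ring_with_last:
  assumes "sorted_wrt (<) ys" "ys \<noteq> []" "\<forall>y\<in>set ys. 1 \<le> y \<and> y < n"
  shows "set (gaps n (set (1 # map Suc ys))) = set (gaps n (set (ys @ [n])))"
proof -
  have sorted: "sorted_wrt (<) (1 # map Suc ys)" "sorted_wrt (<) (ys @ [n])"
    using assms by (auto simp: sorted_wrt_map sorted_wrt_append)
  have "successive_diffs (1 # map Suc ys) = hd ys # successive_diffs ys"
    using assms(2) successive_diffs_map_Suc[of ys] by (cases ys) simp_all
  moreover have "last ys < n" using assms(2,3) by simp
  ultimately have "gaps n (set (1 # map Suc ys)) = (n - last ys) # hd ys # successive_diffs ys"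
    unfolding gaps_sorted[OF sorted(1)] using assms(2) by (simp add: last_map)
  moreover have "gaps n (set (ys @ [n])) = hd ys # successive_diffs ys @ [n - last ys]"
    unfolding gaps_sorted[OF sorted(2)] using assms(2) by (simp add: successive_diffs_snoc)
  ultimately show ?thesis by auto
qed

lemma clg_length_rotate_ring:
  assumes "A \<subseteq> {1..n}"
  shows "clg_length n (rotate_ring n ` A) = clg_length n A"
proof (cases "n \<in> A")
  case False
  obtain xs where xs: "sorted_wrt (<) xs" "set xs = A"
    using obtain_sorted_list[OF finite_subset[OF assms]] by blast
  have below: "\<forall>x\<in>A. x < n" using assms False by (auto simp: subset_iff le_less)
  hence image: "rotate_ring n ` A = set (map Suc xs)" using xs unfolding rotate_ring_def by auto
  show ?thesis
  proof (cases "xs = []")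
    case False
    hence "last xs < n" using below xs(2) last_in_set by blast
    thus ?thesis using gaps_rotate_ring_without_last[OF xs(1) False] image xs(2)
      unfolding clg_length_def by simp
  qed (use xs(2) in simp)
next
  case True
  obtain ys where ys: "sorted_wrt (<) ys" "set ys = A - {n}"
    using obtain_sorted_list[OF finite_subset[OF Diff_subset[THEN subset_trans, OF assms]]] by blast
  have inside: "\<forall>y\<in>set ys. 1 \<le> y \<and> y < n" using assms ys(2) by (auto simp: subset_iff le_less)
  have A: "A = set (ys @ [n])" using ys(2) True by auto
  have image: "rotate_ring n ` A = set (1 # map Suc ys)"
    using A inside unfolding rotate_ring_def by auto
  show ?thesis
  proof (cases "ys = []")
    case True
    hence "gaps n (rotate_ring n ` A) = gaps n A" using A image assms by (simp add: gaps_def)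
    thus ?thesis unfolding clg_length_def by simp
  next
    case False
    thus ?thesis using set_gaps_rotate_ring_with_last[OF ys(1) False inside] A image
      unfolding clg_length_def by simp
  qed
qed

lemma bij_betw_funpow_rotate_ring:
  assumes "n \<ge> 1"
  shows "bij_betw (rotate_ring n ^^ k) {1..n} {1..n}"
proof (induction k)
  case (Suc k)
  show ?case using bij_betw_trans[OF Suc.IH bij_betw_rotate_ring[OF assms]]
    unfolding comp_def by simp
qed (simp add: bij_betw_def)

lemma clg_length_funpow_rotate_ring:
  "n \<ge> 1 \<Longrightarrow> A \<subseteq> {1..n} \<Longrightarrow> clg_length n ((rotate_ring n ^^ k) ` A) = clg_length n A"
proof (induction k)
  case (Suc k)
  have "(rotate_ring n ^^ k) ` A \<subseteq> {1..n}"
    using bij_betw_funpow_rotate_ring[OF Suc(2), of k] Suc(3) bij_betwE by blast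
  moreover have "(rotate_ring n ^^ Suc k) ` A = rotate_ring n ` ((rotate_ring n ^^ k) ` A)"
    by (simp add: image_comp)
  ultimately show ?case using clg_length_rotate_ring Suc by simp
qed simp

lemma funpow_rotate_ring_add: "x + k \<le> n \<Longrightarrow> (rotate_ring n ^^ k) x = x + k"
  by (induction k) (auto simp: rotate_ring_def)

lemma funpow_rotate_ring_mod:
  assumes "Lam dvd n" "x \<in> {1..n}"
  shows "(rotate_ring n ^^ k) x mod Lam = (x + k) mod Lam"
proof (induction k)
  case (Suc k)
  have "rotate_ring n y mod Lam = Suc y mod Lam" if "y \<le> n" for y
    using assms(1) that by (cases "y < n") (auto simp: rotate_ring_def mod_Suc)
  moreover have "(rotate_ring n ^^ k) x \<le> n"
    using bij_betwE[OF bij_betw_funpow_rotate_ring] assms(2) by fastforce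
  ultimately have "(rotate_ring n ^^ Suc k) x mod Lam = Suc ((rotate_ring n ^^ k) x mod Lam) mod Lam"
    by (simp add: mod_Suc_eq)
  also have "\<dots> = (x + Suc k) mod Lam" using Suc.IH by (simp add: mod_Suc_eq)
  finally show ?case .
qed simp

section \<open>Uniform averages over \<open>k\<close>-subsets\<close>

definition ksubsets :: "'a set \<Rightarrow> nat \<Rightarrow> 'a set set" where
  "ksubsets W k = {K. K \<subseteq> W \<and> card K = k}"

lemma finite_ksubsets: "finite W \<Longrightarrow> finite (ksubsets W k)"
  unfolding ksubsets_def by (rule finite_subset[of _ "Pow W"]) auto

lemma finite_of_ksubsets: "finite W \<Longrightarrow> K \<in> ksubsets W k \<Longrightarrow> finite K"
  unfolding ksubsets_def by (auto intro: finite_subset)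

lemma ksubsets_0: "finite W \<Longrightarrow> ksubsets W 0 = {{}}"
  unfolding ksubsets_def by (auto dest: finite_subset)

lemma ksubsets_insert_Suc:
  assumes "finite V" "u \<notin> V"
  shows "ksubsets (insert u V) (Suc k) = ksubsets V (Suc k) \<union> insert u ` ksubsets V k"
proof (intro equalityI subsetI)
  fix K assume K: "K \<in> ksubsets (insert u V) (Suc k)"
  hence "K \<subseteq> insert u V" "card K = Suc k" unfolding ksubsets_def by auto
  hence "finite K" using assms(1) finite_subset by blast
  show "K \<in> ksubsets V (Suc k) \<union> insert u ` ksubsets V k"
  proof (cases "u \<in> K")
    case True
    hence "K - {u} \<in> ksubsets V k" 
      using \<open>K \<subseteq> insert u V\<close> \<open>card K = Suc k\<close> \<open>finite K\<close> unfolding ksubsets_def by auto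
    moreover have "K = insert u (K - {u})" using True by blast
    ultimately show ?thesis by (metis UnI2 image_eqI)
  next
    case False
    thus ?thesis using \<open>K \<subseteq> insert u V\<close> \<open>card K = Suc k\<close> unfolding ksubsets_def by blast
  qed
next
  fix K assume "K \<in> ksubsets V (Suc k) \<union> insert u ` ksubsets V k"
  thus "K \<in> ksubsets (insert u V) (Suc k)"
  proof
    assume "K \<in> ksubsets V (Suc k)" thus ?thesis unfolding ksubsets_def by blast
  next
    assume "K \<in> insert u ` ksubsets V k"
    then obtain K' where K': "K' \<subseteq> V" "card K' = k" "K = insert u K'" unfolding ksubsets_def by blast
    have "finite K'" using K'(1) assms(1) by (rule finite_subset)
    moreover have "u \<notin> K'" using K'(1) assms(2) by blast
    ultimately show ?thesis using K' unfolding ksubsets_def by auto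
  qed
qed

lemma sum_ksubsets_insert_Suc:
  assumes "finite V" "u \<notin> V" "\<And>J. J \<subseteq> V \<Longrightarrow> F (insert u J) = F J"
  shows "(\<Sum>J\<in>ksubsets (insert u V) (Suc k). F J) = (\<Sum>J\<in>ksubsets V (Suc k). F J) + (\<Sum>J\<in>ksubsets V k. F J)"
proof -
  let ?A = "ksubsets V (Suc k)" and ?B = "ksubsets V k"
  have disjoint: "?A \<inter> insert u ` ?B = {}" using assms(2) unfolding ksubsets_def by auto
  have inj: "inj_on (insert u) ?B"
    using assms(2) unfolding ksubsets_def inj_on_def by (metis Diff_insert_absorb mem_Collect_eq subsetD)
  have finA: "finite ?A" and finB: "finite ?B" using finite_ksubsets[OF assms(1)] by auto
  have "(\<Sum>J\<in>ksubsets (insert u V) (Suc k). F J) = sum F ?A + sum F (insert u ` ?B)"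
    unfolding ksubsets_insert_Suc[OF assms(1,2)]
    by (rule sum.union_disjoint[OF finA _ disjoint]) (use finB in simp)
  also have "sum F (insert u ` ?B) = (\<Sum>J\<in>?B. F (insert u J))" using sum.reindex[OF inj] by simp
  also have "\<dots> = sum F ?B" using assms(3) by (intro sum.cong) (auto simp: ksubsets_def)
  finally show ?thesis .
qed

lemma bij_betw_image_ksubsets:
  assumes "bij_betw h A B"
  shows "bij_betw (image h) (ksubsets A k) (ksubsets B k)"
proof -
  have inj: "inj_on h K" if "K \<subseteq> A" for K
    using assms that unfolding bij_betw_def by (auto intro: inj_on_subset)
  show ?thesis
  proof (rule bij_betw_imageI)
    show "inj_on (image h) (ksubsets A k)"
      using inj_on_image_Pow[OF bij_betw_imp_inj_on[OF assms]]
      unfolding ksubsets_def by (auto intro: inj_on_subset)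
    show "image h ` ksubsets A k = ksubsets B k"
    proof (intro equalityI subsetI)
      fix K assume "K \<in> image h ` ksubsets A k"
      then obtain K' where "K' \<subseteq> A" "card K' = k" "K = h ` K'" unfolding ksubsets_def by blast
      thus "K \<in> ksubsets B k" using bij_betw_imp_surj_on[OF assms] inj card_image
        unfolding ksubsets_def by auto
    next
      fix K assume K: "K \<in> ksubsets B k"
      define K' where "K' = inv_into A h ` K"
      have "K \<subseteq> B" using K unfolding ksubsets_def by blast
      hence "h ` K' = K" "K' \<subseteq> A"
        unfolding K'_def using image_inv_into_cancel[OF bij_betw_imp_surj_on[OF assms]]
        by (auto simp flip: bij_betw_imp_surj_on[OF assms] intro: inv_into_into)
      moreover have "card K' = k" using K \<open>h ` K' = K\<close> card_image[OF inj[OF \<open>K' \<subseteq> A\<close>]]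
        unfolding ksubsets_def by simp
      ultimately show "K \<in> image h ` ksubsets A k" unfolding ksubsets_def by blast
    qed
  qed
qed

lemma uniform_avg_reindex:
  "bij_betw h X Y \<Longrightarrow> (\<And>x. x \<in> X \<Longrightarrow> f x = f' (h x)) \<Longrightarrow> uniform_avg X f = uniform_avg Y f'"
  unfolding uniform_avg_def by (metis (no_types, lifting) bij_betw_same_card sum.cong sum.reindex_bij_betw)

lemma uniform_avg_mono: "(\<And>x. x \<in> X \<Longrightarrow> f x \<le> f' x) \<Longrightarrow> uniform_avg X f \<le> uniform_avg X f'"
  unfolding uniform_avg_def by (intro divide_right_mono sum_mono) auto

lemma uniform_avg_cmult: "uniform_avg X (\<lambda>x. c * f x) = c * uniform_avg X f"
  unfolding uniform_avg_def by (simp add: sum_distrib_left)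

lemma uniform_avg_nonneg: "(\<And>x. x \<in> X \<Longrightarrow> 0 \<le> f x) \<Longrightarrow> 0 \<le> uniform_avg X f"
  unfolding uniform_avg_def by (intro divide_nonneg_nonneg sum_nonneg) auto

lemma sum_ksubsets_Suc_remove:
  fixes F :: "'a set \<Rightarrow> real"
  assumes W: "finite W"
  shows "(\<Sum>K\<in>ksubsets W (Suc k). \<Sum>x\<in>K. F (K - {x})) = (\<Sum>K\<in>ksubsets W k. real (card (W - K)) * F K)"
proof -
  have "(\<Sum>K\<in>ksubsets W (Suc k). \<Sum>x\<in>K. F (K - {x}))
      = (\<Sum>(K, x)\<in>Sigma (ksubsets W (Suc k)) (\<lambda>K. K). F (K - {x}))"
    by (rule sum.Sigma) (auto simp: finite_ksubsets[OF W] finite_of_ksubsets[OF W])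
  also have "\<dots> = (\<Sum>(K, y)\<in>Sigma (ksubsets W k) (\<lambda>K. W - K). F K)"
  proof (rule sum.reindex_bij_witness[where i = "\<lambda>(K, y). (insert y K, y)" and j = "\<lambda>(K, x). (K - {x}, x)"])
    fix p assume "p \<in> Sigma (ksubsets W k) (\<lambda>K. W - K)"
    then obtain K y where [simp]: "p = (K, y)" and K: "K \<in> ksubsets W k" "y \<in> W" "y \<notin> K" by auto
    have "finite K" using finite_of_ksubsets[OF W K(1)] .
    thus "(\<lambda>(K, x). (K - {x}, x)) ((\<lambda>(K, y). (insert y K, y)) p) = p" using K by auto
    show "(\<lambda>(K, y). (insert y K, y)) p \<in> Sigma (ksubsets W (Suc k)) (\<lambda>K. K)"
      using K \<open>finite K\<close> unfolding ksubsets_def by auto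
  next
    fix p assume "p \<in> Sigma (ksubsets W (Suc k)) (\<lambda>K. K)"
    then obtain K x where [simp]: "p = (K, x)" and K: "K \<in> ksubsets W (Suc k)" "x \<in> K" by auto
    have "finite K" using finite_of_ksubsets[OF W K(1)] .
    thus "(\<lambda>(K, y). (insert y K, y)) ((\<lambda>(K, x). (K - {x}, x)) p) = p" using K by auto
    show "(\<lambda>(K, x). (K - {x}, x)) p \<in> Sigma (ksubsets W k) (\<lambda>K. W - K)"
      using K \<open>finite K\<close> unfolding ksubsets_def by auto
    show "(case (\<lambda>(K, x). (K - {x}, x)) p of (K, y) \<Rightarrow> F K) = (case p of (K, x) \<Rightarrow> F (K - {x}))"
      by simp
  qed
  also have "\<dots> = (\<Sum>K\<in>ksubsets W k. \<Sum>y\<in>W - K. F K)"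
    by (rule sum.Sigma[symmetric]) (auto simp: finite_ksubsets[OF W] W)
  finally show ?thesis by simp
qed

lemma divide_le_divide_of_scaled:
  fixes a b s s' c c' :: real
  assumes "0 < a" "a * s' \<le> b * s" "a * c' = b * c" "0 \<le> s" "0 \<le> c" "0 \<le> c'"
  shows "s' / c' \<le> s / c"
proof (cases "c' = 0")
  case False
  hence "0 < b * c" using assms by (metis mult_pos_pos less_eq_real_def)
  hence "0 < b" using assms(5) by (auto simp: zero_less_mult_iff)
  have "s' / c' = (a * s') / (a * c')" using assms(1) by simp
  also have "\<dots> \<le> (b * s) / (b * c)"
    unfolding assms(3) using assms(2) \<open>0 < b * c\<close> by (rule divide_right_mono[OF _ less_imp_le])
  also have "\<dots> = s / c" using \<open>0 < b\<close> by simp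
  finally show ?thesis .
qed (use assms in simp)

lemma uniform_avg_ksubsets_Suc_le:
  fixes \<phi> :: "'a set \<Rightarrow> real"
  assumes W: "finite W" and nonneg: "\<And>K. K \<subseteq> W \<Longrightarrow> 0 \<le> \<phi> K"
    and antimono: "\<And>K K'. K \<subseteq> K' \<Longrightarrow> K' \<subseteq> W \<Longrightarrow> \<phi> K' \<le> \<phi> K"
  shows "uniform_avg (ksubsets W (Suc k)) \<phi> \<le> uniform_avg (ksubsets W k) \<phi>"
proof -
  have card_compl: "real (card (W - K)) = real (card W) - real k" if "K \<in> ksubsets W k" for K
    using that W unfolding ksubsets_def by (auto simp: card_Diff_subset finite_subset of_nat_diff card_mono)
  have card_K: "real (card K) = real k + 1" if "K \<in> ksubsets W (Suc k)" for K
    using that unfolding ksubsets_def by auto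
  define S1 where "S1 = sum \<phi> (ksubsets W (Suc k))"
  define S0 where "S0 = sum \<phi> (ksubsets W k)"
  define C1 where "C1 = real (card (ksubsets W (Suc k)))"
  define C0 where "C0 = real (card (ksubsets W k))"
  have "(real k + 1) * S1 = (\<Sum>K\<in>ksubsets W (Suc k). \<Sum>x\<in>K. \<phi> K)"
    unfolding S1_def sum_distrib_left by (rule sum.cong) (use card_K in auto)
  also have "\<dots> \<le> (\<Sum>K\<in>ksubsets W (Suc k). \<Sum>x\<in>K. \<phi> (K - {x}))"
    by (intro sum_mono antimono) (auto simp: ksubsets_def)
  also have "\<dots> = (real (card W) - real k) * S0"
    unfolding sum_ksubsets_Suc_remove[OF W] S0_def sum_distrib_left
    by (rule sum.cong) (use card_compl in auto)
  finally have sums: "(real k + 1) * S1 \<le> (real (card W) - real k) * S0" .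
  have "(real k + 1) * C1 = (\<Sum>K\<in>ksubsets W (Suc k). \<Sum>x\<in>K. (1::real))"
    unfolding C1_def by (simp add: card_K)
  also have "\<dots> = (\<Sum>K\<in>ksubsets W k. real (card (W - K)) * 1)"
    by (rule sum_ksubsets_Suc_remove[OF W])
  also have "\<dots> = (real (card W) - real k) * C0" unfolding C0_def by (simp add: card_compl)
  finally have cards: "(real k + 1) * C1 = (real (card W) - real k) * C0" .
  have "0 \<le> S0" unfolding S0_def by (rule sum_nonneg) (auto simp: ksubsets_def nonneg)
  have "S1 / C1 \<le> S0 / C0"
    by (rule divide_le_divide_of_scaled[OF _ sums cards \<open>0 \<le> S0\<close>]) (auto simp: C0_def C1_def)
  thus ?thesis unfolding uniform_avg_def S1_def S0_def C1_def C0_def .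
qed

text \<open>Induction on \<open>E\<close>, using that averages over \<open>j\<close>-subsets of \<open>W\<close> decrease in \<open>j\<close>.\<close>

lemma uniform_avg_ksubsets_mult_card_le_sum_restrict:
  fixes \<phi> :: "'a set \<Rightarrow> real"
  assumes W: "finite W" and "finite E" "E \<inter> W = {}"
    and nonneg: "\<And>K. K \<subseteq> W \<Longrightarrow> 0 \<le> \<phi> K"
    and antimono: "\<And>K K'. K \<subseteq> K' \<Longrightarrow> K' \<subseteq> W \<Longrightarrow> \<phi> K' \<le> \<phi> K"
  shows "uniform_avg (ksubsets W k) \<phi> * real (card (ksubsets (W \<union> E) k))
           \<le> (\<Sum>J\<in>ksubsets (W \<union> E) k. \<phi> (J \<inter> W))"
  using assms(2,3)
proof (induction E arbitrary: k rule: finite_induct)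
  case empty
  have "(\<Sum>J\<in>ksubsets W k. \<phi> (J \<inter> W)) = sum \<phi> (ksubsets W k)"
    by (rule sum.cong) (auto simp: ksubsets_def Int_absorb2)
  thus ?case unfolding uniform_avg_def using finite_ksubsets[OF W, of k]
    by (cases "card (ksubsets W k) = 0") auto
next
  case (insert u E)
  have u: "u \<notin> W \<union> E" and disj: "E \<inter> W = {}" using insert by auto
  have fin: "finite (W \<union> E)" using W insert by simp
  have V: "W \<union> insert u E = insert u (W \<union> E)" by auto
  show ?case
  proof (cases k)
    case 0
    have "ksubsets (W \<union> insert u E) 0 = ksubsets (W \<union> E) 0"
      unfolding V using ksubsets_0[OF fin] ksubsets_0[of "insert u (W \<union> E)"] fin by simp
    thus ?thesis using insert.IH[OF disj, of 0] 0 by simp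
  next
    case (Suc k')
    let ?A = "ksubsets (W \<union> E) (Suc k')" and ?B = "ksubsets (W \<union> E) k'"
    have sum: "(\<Sum>J\<in>ksubsets (W \<union> insert u E) k. \<phi> (J \<inter> W))
        = (\<Sum>J\<in>?A. \<phi> (J \<inter> W)) + (\<Sum>J\<in>?B. \<phi> (J \<inter> W))"
      unfolding V Suc by (rule sum_ksubsets_insert_Suc[OF fin u]) (use u in auto)
    have card: "card (ksubsets (W \<union> insert u E) k) = card ?A + card ?B"
      using sum_ksubsets_insert_Suc[OF fin u, of "\<lambda>_. 1::nat" k'] unfolding V Suc by simp
    have "uniform_avg (ksubsets W (Suc k')) \<phi> \<le> uniform_avg (ksubsets W k') \<phi>"
      by (rule uniform_avg_ksubsets_Suc_le[OF W nonneg antimono])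
    hence "uniform_avg (ksubsets W (Suc k')) \<phi> * real (card ?B) \<le> (\<Sum>J\<in>?B. \<phi> (J \<inter> W))"
      using insert.IH[OF disj, of k'] by (meson mult_right_mono of_nat_0_le_iff order_trans)
    moreover have "uniform_avg (ksubsets W (Suc k')) \<phi> * real (card ?A) \<le> (\<Sum>J\<in>?A. \<phi> (J \<inter> W))"
      using insert.IH[OF disj] .
    ultimately show ?thesis unfolding sum card by (simp add: Suc distrib_left)
  qed
qed

lemma uniform_avg_ksubsets_le_restrict:
  fixes \<phi> :: "'a set \<Rightarrow> real"
  assumes "finite V" "W \<subseteq> V"
    and nonneg: "\<And>K. K \<subseteq> W \<Longrightarrow> 0 \<le> \<phi> K"
    and antimono: "\<And>K K'. K \<subseteq> K' \<Longrightarrow> K' \<subseteq> W \<Longrightarrow> \<phi> K' \<le> \<phi> K"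
  shows "uniform_avg (ksubsets W k) \<phi> \<le> uniform_avg (ksubsets V k) (\<lambda>J. \<phi> (J \<inter> W))"
proof -
  have W: "finite W" using assms(1,2) by (rule finite_subset[rotated])
  have V: "V = W \<union> (V - W)" using assms(2) by auto
  have "uniform_avg (ksubsets W k) \<phi> * real (card (ksubsets (W \<union> (V - W)) k))
      \<le> (\<Sum>J\<in>ksubsets (W \<union> (V - W)) k. \<phi> (J \<inter> W))"
    by (rule uniform_avg_ksubsets_mult_card_le_sum_restrict) (use W assms nonneg antimono in auto)
  hence le: "uniform_avg (ksubsets W k) \<phi> * real (card (ksubsets V k)) \<le> (\<Sum>J\<in>ksubsets V k. \<phi> (J \<inter> W))"
    unfolding V[symmetric] .
  show ?thesis
  proof (cases "card (ksubsets V k) = 0")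
    case True
    hence "ksubsets V k = {}" using finite_ksubsets[OF assms(1)] by simp
    hence "ksubsets W k = {}" using assms(2) unfolding ksubsets_def by auto
    thus ?thesis using True by (simp add: uniform_avg_def)
  next
    case False
    thus ?thesis using le unfolding uniform_avg_def by (simp add: pos_le_divide_eq)
  qed
qed

lemma sum_card_mult_eq_sum_containing:
  fixes F :: "'a set \<Rightarrow> real"
  assumes "finite X" "finite U" "\<And>A. A \<in> X \<Longrightarrow> A \<subseteq> U"
  shows "(\<Sum>A\<in>X. real (card A) * F A) = (\<Sum>a\<in>U. \<Sum>A\<in>{A\<in>X. a \<in> A}. F A)"
proof -
  have "(\<Sum>A\<in>X. real (card A) * F A) = (\<Sum>A\<in>X. \<Sum>a\<in>{a\<in>U. a \<in> A}. F A)"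
  proof (rule sum.cong[OF refl])
    fix A assume "A \<in> X"
    hence "{a\<in>U. a \<in> A} = A" using assms(3) by blast
    thus "real (card A) * F A = (\<Sum>a\<in>{a\<in>U. a \<in> A}. F A)" by simp
  qed
  also have "\<dots> = (\<Sum>a\<in>U. \<Sum>A\<in>{A\<in>X. a \<in> A}. F A)"
    by (rule sum.swap_restrict[OF assms(1,2)])
  finally show ?thesis .
qed

lemma uniform_avg_eq_uniform_avg_containing:
  fixes f :: "'a set \<Rightarrow> real"
  assumes "finite X" "finite U" "b \<in> U"
    and size: "\<And>A. A \<in> X \<Longrightarrow> A \<subseteq> U \<and> card A = Suc m"
    and alike: "\<And>a. a \<in> U \<Longrightarrow>
      sum f {A\<in>X. a \<in> A} = sum f {A\<in>X. b \<in> A} \<and> card {A\<in>X. a \<in> A} = card {A\<in>X. b \<in> A}"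
  shows "uniform_avg X f = uniform_avg {A\<in>X. b \<in> A} f"
proof -
  have double: "(\<Sum>A\<in>X. real (card A) * F A) = real (card U) * sum F {A\<in>X. b \<in> A}"
    if "\<And>a. a \<in> U \<Longrightarrow> sum F {A\<in>X. a \<in> A} = sum F {A\<in>X. b \<in> A}" for F :: "'a set \<Rightarrow> real"
    using sum_card_mult_eq_sum_containing[OF assms(1,2), of F] size that by simp
  have sums: "real (Suc m) * sum f X = real (card U) * sum f {A\<in>X. b \<in> A}"
    using double[of f] alike size by (simp add: sum_distrib_left)
  have cards: "real (Suc m) * real (card X) = real (card U) * real (card {A\<in>X. b \<in> A})"
    using double[of "\<lambda>_. 1"] alike size by (simp add: algebra_simps)
  have "card U > 0" using assms(2,3) card_gt_0_iff by blast
  have "sum f X / real (card X) = (real (Suc m) * sum f X) / (real (Suc m) * real (card X))"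
    by simp
  also have "\<dots> = sum f {A\<in>X. b \<in> A} / real (card {A\<in>X. b \<in> A})"
    unfolding sums cards using \<open>card U > 0\<close> by simp
  finally show ?thesis unfolding uniform_avg_def .
qed

section \<open>The single-wavelength ring\<close>

lemma bij_betw_image_rotate_containing:
  assumes "a \<in> {1..n}"
  shows "bij_betw (image (rotate_ring n ^^ (n - a)))
           {A \<in> ksubsets {1..n} k. a \<in> A} {A \<in> ksubsets {1..n} k. n \<in> A}"
proof (rule bij_betw_Collect[OF bij_betw_image_ksubsets])
  have "n \<ge> 1" using assms by simp
  show bij: "bij_betw (rotate_ring n ^^ (n - a)) {1..n} {1..n}"
    using bij_betw_funpow_rotate_ring[OF \<open>n \<ge> 1\<close>] .
  have rotate_a: "(rotate_ring n ^^ (n - a)) a = n" using assms by (subst funpow_rotate_ring_add) auto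
  have inj: "inj_on (rotate_ring n ^^ (n - a)) {1..n}" using bij by (rule bij_betw_imp_inj_on)
  show "n \<in> (rotate_ring n ^^ (n - a)) ` A \<longleftrightarrow> a \<in> A" if "A \<in> ksubsets {1..n} k" for A
  proof -
    have A: "A \<subseteq> {1..n}" using that unfolding ksubsets_def by simp
    show ?thesis using inj_on_image_mem_iff[OF inj assms A] rotate_a by simp
  qed
qed

lemma bij_betw_insert_ksubsets_containing:
  fixes n :: nat
  assumes "n \<ge> 1"
  shows "bij_betw (insert n) (ksubsets {1..<n} k) {A \<in> ksubsets {1..n} (Suc k). n \<in> A}"
proof (rule bij_betw_byWitness[where f' = "\<lambda>A. A - {n}"])
  show "\<forall>J\<in>ksubsets {1..<n} k. insert n J - {n} = J"
  proof
    fix J assume "J \<in> ksubsets {1..<n} k"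
    hence "n \<notin> J" unfolding ksubsets_def by auto
    thus "insert n J - {n} = J" by simp
  qed
  show "\<forall>A\<in>{A \<in> ksubsets {1..n} (Suc k). n \<in> A}. insert n (A - {n}) = A" by auto
  show "insert n ` ksubsets {1..<n} k \<subseteq> {A \<in> ksubsets {1..n} (Suc k). n \<in> A}"
  proof
    fix A assume "A \<in> insert n ` ksubsets {1..<n} k"
    then obtain J where J: "J \<subseteq> {1..<n}" "card J = k" "A = insert n J" unfolding ksubsets_def by blast
    have "finite J" using J(1) by (rule finite_subset) simp
    moreover have "n \<notin> J" using J(1) by auto
    ultimately show "A \<in> {A \<in> ksubsets {1..n} (Suc k). n \<in> A}"
      using J assms unfolding ksubsets_def by auto
  qed
  show "(\<lambda>A. A - {n}) ` {A \<in> ksubsets {1..n} (Suc k). n \<in> A} \<subseteq> ksubsets {1..<n} k"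
  proof
    fix J assume "J \<in> (\<lambda>A. A - {n}) ` {A \<in> ksubsets {1..n} (Suc k). n \<in> A}"
    then obtain A where A: "A \<subseteq> {1..n}" "card A = Suc k" "n \<in> A" "J = A - {n}"
      unfolding ksubsets_def by blast
    have "finite A" using A(1) by (rule finite_subset) simp
    thus "J \<in> ksubsets {1..<n} k" using A unfolding ksubsets_def by auto
  qed
qed

text \<open>By rotation symmetry one may condition on node \<open>n\<close> being active.\<close>

lemma g_eq_uniform_avg_max_gap:
  assumes "n \<ge> 1"
  shows "g l n = uniform_avg (ksubsets {1..<n} l) (\<lambda>J. real (max_gap (insert 0 (insert n J))))"
proof -
  define X where "X = ksubsets {1..n} (Suc l)"
  define f where "f A = real (clg_length n A)" for A
  have "g l n = uniform_avg X f" unfolding g_def X_def f_def ksubsets_def by simp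
  also have "\<dots> = uniform_avg {A\<in>X. n \<in> A} f"
  proof (rule uniform_avg_eq_uniform_avg_containing[where U = "{1..n}" and m = l])
    show "finite X" unfolding X_def by (simp add: finite_ksubsets)
    show "A \<subseteq> {1..n} \<and> card A = Suc l" if "A \<in> X" for A using that unfolding X_def ksubsets_def by simp
    fix a assume "a \<in> {1..n}"
    note bij = bij_betw_image_rotate_containing[OF this, of "Suc l", folded X_def]
    have "sum f {A\<in>X. n \<in> A} = sum (f \<circ> image (rotate_ring n ^^ (n - a))) {A\<in>X. a \<in> A}"
      using sum.reindex_bij_betw[OF bij, of f] by (simp add: comp_def)
    also have "\<dots> = sum f {A\<in>X. a \<in> A}"
      by (rule sum.cong) (use clg_length_funpow_rotate_ring[OF assms] in \<open>auto simp: X_def ksubsets_def f_def\<close>)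
    finally show "sum f {A\<in>X. a \<in> A} = sum f {A\<in>X. n \<in> A} \<and> card {A\<in>X. a \<in> A} = card {A\<in>X. n \<in> A}"
      using bij_betw_same_card[OF bij] by simp
  qed (use assms in simp_all)
  also have "\<dots> = uniform_avg (ksubsets {1..<n} l) (\<lambda>J. real (max_gap (insert 0 (insert n J))))"
  proof (rule uniform_avg_reindex[OF bij_betw_insert_ksubsets_containing[OF assms, of l, folded X_def], symmetric])
    fix J assume "J \<in> ksubsets {1..<n} l"
    hence "J \<subseteq> {1..<n}" unfolding ksubsets_def by simp
    thus "real (max_gap (insert 0 (insert n J))) = f (insert n J)"
      unfolding f_def using clg_length_insert_eq_max_gap[OF assms] by simp
  qed
  finally show ?thesis .
qed

lemma g_le_g_Suc:
  assumes "n \<ge> 1"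
  shows "g l n \<le> g l (Suc n)"
proof -
  define W where "W = {1..<n}"
  define \<phi> where "\<phi> K = real (max_gap (insert 0 (insert n K)))" for K
  have "g l n = uniform_avg (ksubsets W l) \<phi>"
    unfolding g_eq_uniform_avg_max_gap[OF assms] W_def \<phi>_def ..
  also have "\<dots> \<le> uniform_avg (ksubsets {1..n} l) (\<lambda>J. \<phi> (J \<inter> W))"
  proof (rule uniform_avg_ksubsets_le_restrict)
    show "\<phi> K' \<le> \<phi> K" if "K \<subseteq> K'" "K' \<subseteq> W" for K K'
    proof -
      have "K' \<subseteq> {0..n}" using that(2) unfolding W_def by auto
      thus ?thesis using that(1) assms max_gap_insert_ends_antimono[of 0 n K K'] unfolding \<phi>_def by simp
    qed
  qed (auto simp: W_def \<phi>_def)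
  also have "\<dots> \<le> uniform_avg (ksubsets {1..n} l) (\<lambda>J. real (max_gap (insert 0 (insert (Suc n) J))))"
  proof (rule uniform_avg_mono)
    fix J assume "J \<in> ksubsets {1..n} l"
    hence J: "J \<subseteq> {1..n}" "finite J" unfolding ksubsets_def by (auto intro: finite_subset)
    let ?T = "insert 0 (insert (Suc n) J)"
    txt \<open>Moving the right end point from \<open>n + 1\<close> to \<open>n\<close> shortens no gap.\<close>
    have clip: "(\<lambda>x. min x n) ` ?T = insert 0 (insert n (J \<inter> W))"
      using J(1) unfolding W_def by (auto simp: min_def image_iff intro: bexI[of _ 0])
    have "1 * max_gap ((\<lambda>x. min x n) ` ?T) \<le> max_gap ?T"
      by (rule mult_max_gap_image_le[of _ 0 _ n]) (use assms J clip in auto)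
    thus "\<phi> (J \<inter> W) \<le> real (max_gap ?T)" unfolding \<phi>_def clip by simp
  qed
  also have "\<dots> = g l (Suc n)"
    using g_eq_uniform_avg_max_gap[of "Suc n" l] by (simp add: atLeastLessThanSuc_atLeastAtMost)
  finally show ?thesis .
qed

lemma g_0: "g l 0 = 0"
  unfolding g_def uniform_avg_def by simp

lemma g_nonneg: "0 \<le> g l n"
  unfolding g_def by (rule uniform_avg_nonneg) simp

lemma g_mono: "m \<le> n \<Longrightarrow> g l m \<le> g l n"
proof (induction n rule: dec_induct)
  case (step n)
  have "g l n \<le> g l (Suc n)"
    using g_le_g_Suc[of n l] g_0 g_nonneg by (cases n) auto
  thus ?case using step.IH by simp
qed simp

lemma g_pred_le_uniform_avg_max_gap_ends:
  assumes "n \<ge> 2"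
  shows "g l (n - 1) \<le> uniform_avg (ksubsets {1..n} l) (\<lambda>J. real (max_gap (insert 1 (insert n J))))"
proof -
  define W where "W = {2..<n}"
  define \<phi> where "\<phi> K = real (max_gap (insert 1 (insert n K)))" for K
  have "g l (n - 1) = uniform_avg (ksubsets {1..<n - 1} l) (\<lambda>I. real (max_gap (insert 0 (insert (n - 1) I))))"
    using g_eq_uniform_avg_max_gap assms by simp
  also have "\<dots> = uniform_avg (ksubsets W l) \<phi>"
  proof (rule uniform_avg_reindex[OF bij_betw_image_ksubsets])
    show "bij_betw Suc {1..<n - 1} W" unfolding W_def using assms
      by (simp add: bij_betw_def image_Suc_atLeastLessThan numeral_2_eq_2)
    fix I assume "I \<in> ksubsets {1..<n - 1} l"
    hence "finite I" unfolding ksubsets_def by (auto intro: finite_subset)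
    hence "max_gap ((\<lambda>x. x + 1) ` insert 0 (insert (n - 1) I)) = max_gap (insert 0 (insert (n - 1) I))"
      using assms by (intro max_gap_image_add[of _ 0 "n - 1"]) auto
    moreover have "(\<lambda>x. x + 1) ` insert 0 (insert (n - 1) I) = insert 1 (insert n (Suc ` I))"
      using assms by auto
    ultimately show "real (max_gap (insert 0 (insert (n - 1) I))) = \<phi> (Suc ` I)" unfolding \<phi>_def by simp
  qed
  also have "\<dots> \<le> uniform_avg (ksubsets {1..n} l) (\<lambda>J. \<phi> (J \<inter> W))"
  proof (rule uniform_avg_ksubsets_le_restrict)
    show "\<phi> K' \<le> \<phi> K" if "K \<subseteq> K'" "K' \<subseteq> W" for K K'
    proof -
      have "K' \<subseteq> {1..n}" using that(2) unfolding W_def by auto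
      thus ?thesis using that(1) assms max_gap_insert_ends_antimono[of 1 n K K'] unfolding \<phi>_def by simp
    qed
  qed (auto simp: W_def \<phi>_def)
  also have "\<dots> = uniform_avg (ksubsets {1..n} l) \<phi>"
  proof (rule uniform_avg_reindex[where h = id])
    fix J assume "J \<in> ksubsets {1..n} l"
    hence "insert 1 (insert n (J \<inter> W)) = insert 1 (insert n J)" unfolding ksubsets_def W_def by auto
    thus "\<phi> (J \<inter> W) = \<phi> (id J)" unfolding \<phi>_def by simp
  qed simp
  finally show ?thesis unfolding \<phi>_def .
qed

section \<open>The wavelength ring\<close>

definition residue_nodes :: "nat \<Rightarrow> nat \<Rightarrow> nat \<Rightarrow> nat set" where
  "residue_nodes N Lam r = {x \<in> {1..N}. x mod Lam = r}"

lemma drop_set_eq_residue_nodes: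
  assumes "lam \<in> {1..Lam}"
  shows "drop_set Lam eta lam = residue_nodes (eta * Lam) Lam (lam mod Lam)"
proof (intro equalityI subsetI)
  fix x assume "x \<in> drop_set Lam eta lam"
  then obtain k where k: "k < eta" "x = lam + k * Lam" unfolding drop_set_def by blast
  have "lam + k * Lam \<le> Suc k * Lam" using assms by simp
  also have "\<dots> \<le> eta * Lam" using k(1) by (intro mult_right_mono) auto
  finally show "x \<in> residue_nodes (eta * Lam) Lam (lam mod Lam)"
    using k(2) assms unfolding residue_nodes_def by simp
next
  fix x assume "x \<in> residue_nodes (eta * Lam) Lam (lam mod Lam)"
  hence x: "1 \<le> x" "x \<le> eta * Lam" and mod: "x mod Lam = lam mod Lam"
    unfolding residue_nodes_def by auto
  have "lam \<le> x"
  proof (cases "lam = Lam")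
    case True
    hence "Lam dvd x" using mod by auto
    thus ?thesis using x(1) True by (auto intro: dvd_imp_le)
  next
    case False
    hence "x mod Lam = lam" using mod assms by simp
    thus ?thesis using mod_less_eq_dividend[of x Lam] by simp
  qed
  hence "Lam dvd x - lam" using mod mod_eq_dvd_iff_nat[of lam x Lam] by simp
  then obtain k where "x - lam = Lam * k" by (rule dvdE)
  hence "x = lam + k * Lam" using \<open>lam \<le> x\<close> by (simp add: mult.commute)
  moreover have "k < eta"
  proof (rule ccontr)
    assume "\<not> k < eta"
    hence "eta * Lam \<le> k * Lam" by (intro mult_right_mono) auto
    moreover have "1 \<le> lam" using assms by simp
    ultimately show False using x(2) \<open>x = lam + k * Lam\<close> by linarith
  qed
  ultimately show "x \<in> drop_set Lam eta lam" unfolding drop_set_def by blast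
qed

lemma mod_add_right_cancel_nat: "((x::nat) + k) mod m = (y + k) mod m \<longleftrightarrow> x mod m = y mod m"
  by (auto simp: nat_mod_eq_iff)

lemma image_funpow_rotate_ring_residue_nodes:
  assumes "N \<ge> 1" "Lam dvd N" "r < Lam"
  shows "(rotate_ring N ^^ k) ` residue_nodes N Lam r = residue_nodes N Lam ((r + k) mod Lam)"
proof -
  let ?\<rho> = "rotate_ring N ^^ k"
  have bij: "bij_betw ?\<rho> {1..N} {1..N}" by (rule bij_betw_funpow_rotate_ring[OF assms(1)])
  have "?\<rho> x mod Lam = (r + k) mod Lam \<longleftrightarrow> x mod Lam = r" if "x \<in> {1..N}" for x
    unfolding funpow_rotate_ring_mod[OF assms(2) that] mod_add_left_eq[of r Lam k, symmetric]
      mod_add_right_cancel_nat using assms(3) by simp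
  hence "bij_betw ?\<rho> (residue_nodes N Lam r) (residue_nodes N Lam ((r + k) mod Lam))"
    unfolding residue_nodes_def by (intro bij_betw_Collect[OF bij]) auto
  thus ?thesis by (rule bij_betw_imp_surj_on)
qed

lemma cond_exp_clg_eq_uniform_avg_max_gap:
  assumes "eta \<ge> 1" "N = eta * Lam" "lam \<in> {1..Lam}" "S \<in> {1..N}"
  shows "cond_exp_clg Lam eta lam S l =
    uniform_avg (ksubsets (residue_nodes N Lam ((lam + (N - S)) mod Lam) - {N}) l)
      (\<lambda>F. real (max_gap (insert 0 (insert N F))))"
proof -
  define \<rho> where "\<rho> = rotate_ring N ^^ (N - S)"
  define M where "M = residue_nodes N Lam (lam mod Lam)"
  define R where "R = residue_nodes N Lam ((lam + (N - S)) mod Lam)"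
  have "N \<ge> 1" using assms by simp
  have bij: "bij_betw \<rho> {1..N} {1..N}" unfolding \<rho>_def by (rule bij_betw_funpow_rotate_ring[OF \<open>N \<ge> 1\<close>])
  have "\<rho> S = N" unfolding \<rho>_def using assms(4) by (subst funpow_rotate_ring_add) auto
  have "\<rho> ` M = R" unfolding \<rho>_def M_def R_def
    using image_funpow_rotate_ring_residue_nodes[OF \<open>N \<ge> 1\<close>, of Lam "lam mod Lam" "N - S"] assms
    by (simp add: mod_add_left_eq)
  have "M \<subseteq> {1..N}" unfolding M_def residue_nodes_def by auto
  have "\<rho> ` (M - {S}) = \<rho> ` M - \<rho> ` {S}"
    by (rule inj_on_image_set_diff[OF bij_betw_imp_inj_on[OF bij]]) (use \<open>M \<subseteq> {1..N}\<close> assms(4) in auto)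
  hence "\<rho> ` (M - {S}) = R - {N}" using \<open>\<rho> ` M = R\<close> \<open>\<rho> S = N\<close> by simp
  hence bij_MR: "bij_betw \<rho> (M - {S}) (R - {N})"
    by (rule bij_betw_subset[OF bij, rotated]) (use \<open>M \<subseteq> {1..N}\<close> in auto)
  have "cond_exp_clg Lam eta lam S l = uniform_avg (ksubsets (M - {S}) l) (\<lambda>F. real (clg_length N (insert S F)))"
    unfolding cond_exp_clg_def drop_set_eq_residue_nodes[OF assms(3)] M_def ksubsets_def assms(2) ..
  also have "\<dots> = uniform_avg (ksubsets (R - {N}) l) (\<lambda>F. real (max_gap (insert 0 (insert N F))))"
  proof (rule uniform_avg_reindex[OF bij_betw_image_ksubsets[OF bij_MR]])
    fix F assume "F \<in> ksubsets (M - {S}) l"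
    hence F: "F \<subseteq> M - {S}" unfolding ksubsets_def by simp
    hence "insert S F \<subseteq> {1..N}" using \<open>M \<subseteq> {1..N}\<close> assms(4) by auto
    hence "clg_length N (insert S F) = clg_length N (\<rho> ` insert S F)"
      unfolding \<rho>_def by (rule clg_length_funpow_rotate_ring[OF \<open>N \<ge> 1\<close>, symmetric])
    also have "\<dots> = clg_length N (insert N (\<rho> ` F))" using \<open>\<rho> S = N\<close> by simp
    also have "\<dots> = max_gap (insert 0 (insert N (\<rho> ` F)))"
    proof (rule clg_length_insert_eq_max_gap[OF \<open>N \<ge> 1\<close>])
      have "\<rho> ` F \<subseteq> R - {N}" using bij_betw_imp_surj_on[OF bij_MR] F by blast
      thus "\<rho> ` F \<subseteq> {1..<N}" unfolding R_def residue_nodes_def by auto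
    qed
    finally show "real (clg_length N (insert S F)) = real (max_gap (insert 0 (insert N (image \<rho> F))))"
      by simp
  qed
  finally show ?thesis unfolding R_def .
qed

lemma bij_betw_mult_residue_nodes_0:
  assumes "Lam \<ge> 1"
  shows "bij_betw (\<lambda>i. i * Lam) {1..<eta} (residue_nodes (eta * Lam) Lam 0 - {eta * Lam})"
proof (rule bij_betw_byWitness[where f' = "\<lambda>x. x div Lam"])
  show "\<forall>i\<in>{1..<eta}. i * Lam div Lam = i" using assms by simp
  show "\<forall>x\<in>residue_nodes (eta * Lam) Lam 0 - {eta * Lam}. x div Lam * Lam = x"
    unfolding residue_nodes_def by (auto simp: mult.commute)
  show "(\<lambda>i. i * Lam) ` {1..<eta} \<subseteq> residue_nodes (eta * Lam) Lam 0 - {eta * Lam}"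
    using assms unfolding residue_nodes_def by auto
  show "(\<lambda>x. x div Lam) ` (residue_nodes (eta * Lam) Lam 0 - {eta * Lam}) \<subseteq> {1..<eta}"
  proof
    fix i assume "i \<in> (\<lambda>x. x div Lam) ` (residue_nodes (eta * Lam) Lam 0 - {eta * Lam})"
    then obtain x where "x \<in> residue_nodes (eta * Lam) Lam 0" "x \<noteq> eta * Lam" "i = x div Lam"
      by blast
    hence x: "1 \<le> x" "x < eta * Lam" "x mod Lam = 0" "i = x div Lam"
      unfolding residue_nodes_def by auto
    have "Lam \<le> x" using x(1,3) by (auto intro: dvd_imp_le)
    hence "1 \<le> x div Lam" using assms div_greater_zero_iff[of x Lam] by simp
    moreover have "x div Lam < eta" using x(2) assms by (simp add: div_less_iff_less_mult)
    ultimately show "i \<in> {1..<eta}" using x(4) by simp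
  qed
qed

lemma uniform_avg_max_gap_residue_nodes_0:
  assumes "Lam \<ge> 1" "eta \<ge> 1" "N = eta * Lam"
  shows "uniform_avg (ksubsets (residue_nodes N Lam 0 - {N}) l)
           (\<lambda>F. real (max_gap (insert 0 (insert N F)))) = real Lam * g l eta"
proof -
  have "uniform_avg (ksubsets {1..<eta} l) (\<lambda>J. real Lam * real (max_gap (insert 0 (insert eta J))))
      = uniform_avg (ksubsets (residue_nodes N Lam 0 - {N}) l) (\<lambda>F. real (max_gap (insert 0 (insert N F))))"
  proof (unfold assms(3),
      rule uniform_avg_reindex[OF bij_betw_image_ksubsets[OF bij_betw_mult_residue_nodes_0[OF assms(1)]]])
    fix J assume "J \<in> ksubsets {1..<eta} l"
    hence "finite J" unfolding ksubsets_def by (auto intro: finite_subset)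
    hence "max_gap ((\<lambda>i. i * Lam) ` insert 0 (insert eta J)) = Lam * max_gap (insert 0 (insert eta J))"
      using assms by (intro max_gap_image_mult[of _ _ 0 eta]) auto
    thus "real Lam * real (max_gap (insert 0 (insert eta J)))
        = real (max_gap (insert 0 (insert (eta * Lam) ((\<lambda>i. i * Lam) ` J))))"
      by simp
  qed
  thus ?thesis unfolding g_eq_uniform_avg_max_gap[OF assms(2)] uniform_avg_cmult by simp
qed

locale nonzero_residue =
  fixes Lam eta N r :: nat
  assumes eta: "eta \<ge> 1" and N: "N = eta * Lam" and r: "0 < r" "r < Lam"
begin

abbreviation R where "R \<equiv> residue_nodes N Lam r"

definition rank :: "nat \<Rightarrow> nat" where
  "rank x = x div Lam + 1"

lemma residue_node_eq:
  assumes "x \<in> R"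
  shows "x = r + (rank x - 1) * Lam" "rank x \<le> eta" "0 < x" "x < N"
proof -
  have x: "1 \<le> x" "x \<le> N" "x mod Lam = r" using assms unfolding residue_nodes_def by auto
  show "x = r + (rank x - 1) * Lam" using x(3) div_mult_mod_eq[of x Lam] unfolding rank_def by simp
  have "x \<noteq> N" using x(3) r(1) N by auto
  thus "x < N" using x(2) by simp
  thus "rank x \<le> eta" using N r unfolding rank_def by (simp add: div_less_iff_less_mult Suc_le_eq)
  show "0 < x" using x by simp
qed

lemma rank_residue_node: "rank (r + k * Lam) = k + 1"
  using r unfolding rank_def by simp

lemma bij_betw_rank: "bij_betw rank R {1..eta}"
proof (rule bij_betw_byWitness[where f' = "\<lambda>j. r + (j - 1) * Lam"])
  show "\<forall>x\<in>R. r + (rank x - 1) * Lam = x" using residue_node_eq(1) by auto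
  show "\<forall>j\<in>{1..eta}. rank (r + (j - 1) * Lam) = j" using rank_residue_node by auto
  show "rank ` R \<subseteq> {1..eta}" using residue_node_eq(2) unfolding rank_def by auto
  show "(\<lambda>j. r + (j - 1) * Lam) ` {1..eta} \<subseteq> R"
  proof
    fix x assume "x \<in> (\<lambda>j. r + (j - 1) * Lam) ` {1..eta}"
    then obtain j where j: "1 \<le> j" "j \<le> eta" "x = r + (j - 1) * Lam" by auto
    have "(j - 1) * Lam + Lam \<le> eta * Lam"
      using j mult_le_mono1[OF j(2), of Lam] by (simp add: diff_mult_distrib)
    thus "x \<in> R" using j r N unfolding residue_nodes_def by auto
  qed
qed

lemma mult_rank: "x \<in> R \<Longrightarrow> Lam * rank x = x + (Lam - r)"
  using residue_node_eq[of x] r unfolding rank_def by (simp add: algebra_simps)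

lemma finite_R: "finite R"
  unfolding residue_nodes_def by simp

lemma max_gap_le_mult_max_gap_rank:
  assumes "F \<subseteq> R"
  shows "max_gap (insert 0 (insert N F)) \<le> Lam * max_gap (insert 0 (insert (eta + 1) (rank ` F)))"
proof -
  let ?T = "insert 0 (insert N F)"
  txt \<open>On \<open>?T\<close>, \<open>\<sigma>\<close> is division by \<open>Lam\<close> up to the monotone offset \<open>e\<close>.\<close>
  define \<sigma> where "\<sigma> z = (if z = 0 then 0 else if z = N then eta + 1 else rank z)" for z
  define e where "e z = (if z = 0 then 0 else if z = N then Lam else Lam - r)" for z
  have F: "0 < z" "z < N" if "z \<in> F" for z using residue_node_eq(3,4) assms that by auto
  have "0 < N" using N eta r by simp
  have "\<sigma> ` F = rank ` F" using F unfolding \<sigma>_def by (intro image_cong) auto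
  moreover have "\<sigma> 0 = 0" "\<sigma> N = eta + 1" using \<open>0 < N\<close> unfolding \<sigma>_def by auto
  ultimately have "\<sigma> ` ?T = insert 0 (insert (eta + 1) (rank ` F))" by simp
  moreover have "max_gap ?T \<le> Lam * max_gap (\<sigma> ` ?T)"
  proof (rule max_gap_le_mult_image_offset[of _ 0 N _ _ e])
    show "finite ?T" using finite_subset[OF assms finite_R] by simp
    show "Lam * \<sigma> z = z + e z" if "z \<in> ?T" for z
      using that F mult_rank assms N unfolding \<sigma>_def e_def by (auto simp: algebra_simps)
    show "e x \<le> e y" if "x \<in> ?T" "y \<in> ?T" "x \<le> y" for x y
      using that F unfolding e_def by fastforce
  qed (use \<open>0 < N\<close> in auto)
  ultimately show ?thesis by simp
qed

lemma mult_max_gap_rank_le_max_gap: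
  assumes "F \<subseteq> R" "eta \<ge> 2"
  shows "Lam * max_gap (insert 1 (insert eta (rank ` F))) \<le> max_gap (insert 0 (insert N F))"
proof -
  let ?T = "insert 0 (insert N F)"
  txt \<open>On \<open>?T\<close>, \<open>\<sigma>\<close> is division by \<open>Lam\<close> up to the antitone offset \<open>e\<close>.\<close>
  define \<sigma> where "\<sigma> z = (if z = 0 then 1 else if z = N then eta else rank z)" for z
  define e where "e z = (if z = 0 then Lam else if z = N then 0 else Lam - r)" for z
  have F: "0 < z" "z < N" "1 \<le> rank z" "rank z \<le> eta" if "z \<in> F" for z
    using residue_node_eq(2-4) assms that unfolding rank_def by auto
  have "0 < N" using N eta r by simp
  have "\<sigma> ` F = rank ` F" using F unfolding \<sigma>_def by (intro image_cong) auto
  moreover have "\<sigma> 0 = 1" "\<sigma> N = eta" using \<open>0 < N\<close> unfolding \<sigma>_def by auto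
  ultimately have "\<sigma> ` ?T = insert 1 (insert eta (rank ` F))" by simp
  moreover have "Lam * max_gap (\<sigma> ` ?T) \<le> max_gap ?T"
  proof (rule mult_max_gap_image_le_offset[of _ 1 _ eta])
    show "finite ?T" using finite_subset[OF assms(1) finite_R] by simp
    show "1 \<in> \<sigma> ` ?T" "eta \<in> \<sigma> ` ?T" "1 < eta" using assms(2) \<open>\<sigma> ` ?T = _\<close> by auto
    show "\<sigma> x \<le> \<sigma> y" if "x \<in> ?T" "y \<in> ?T" "x \<le> y" for x y
      using that F eta unfolding \<sigma>_def rank_def by (auto simp: div_le_mono dest: F(2))
    show "Lam * \<sigma> z = z + e z" if "z \<in> ?T" for z
      using that F mult_rank assms N unfolding \<sigma>_def e_def by (auto simp: algebra_simps)
    show "e y \<le> e x" if "x \<in> ?T" "y \<in> ?T" "x \<le> y" for x y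
      using that F unfolding e_def by fastforce
  qed
  ultimately show ?thesis by simp
qed

lemma uniform_avg_max_gap_le_upper:
  "uniform_avg (ksubsets R l) (\<lambda>F. real (max_gap (insert 0 (insert N F)))) \<le> real Lam * g l (eta + 1)"
proof -
  have "uniform_avg (ksubsets R l) (\<lambda>F. real (max_gap (insert 0 (insert N F))))
     \<le> uniform_avg (ksubsets R l) (\<lambda>F. real Lam * real (max_gap (insert 0 (insert (eta + 1) (rank ` F)))))"
    by (rule uniform_avg_mono)
      (use max_gap_le_mult_max_gap_rank in \<open>auto simp: ksubsets_def simp flip: of_nat_mult\<close>)
  also have "\<dots> = real Lam * uniform_avg (ksubsets {1..eta} l) (\<lambda>J. real (max_gap (insert 0 (insert (eta + 1) J))))"
    unfolding uniform_avg_cmult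
    by (rule arg_cong[OF uniform_avg_reindex[OF bij_betw_image_ksubsets[OF bij_betw_rank]]]) simp
  also have "\<dots> = real Lam * g l (eta + 1)"
    using g_eq_uniform_avg_max_gap[of "eta + 1" l] by (simp add: atLeastLessThanSuc_atLeastAtMost)
  finally show ?thesis .
qed

lemma uniform_avg_max_gap_ge_lower:
  "real Lam * g l (eta - 1) \<le> uniform_avg (ksubsets R l) (\<lambda>F. real (max_gap (insert 0 (insert N F))))"
proof (cases "eta = 1")
  case True
  thus ?thesis using g_0 by (simp add: uniform_avg_nonneg)
next
  case False
  hence "eta \<ge> 2" using eta by simp
  define \<phi> where "\<phi> K = real (max_gap (insert 1 (insert eta K)))" for K
  have "g l (eta - 1) \<le> uniform_avg (ksubsets {1..eta} l) \<phi>"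
    unfolding \<phi>_def by (rule g_pred_le_uniform_avg_max_gap_ends[OF \<open>eta \<ge> 2\<close>])
  also have "\<dots> = uniform_avg (ksubsets R l) (\<lambda>F. \<phi> (rank ` F))"
    by (rule uniform_avg_reindex[OF bij_betw_image_ksubsets[OF bij_betw_rank], symmetric]) simp
  finally have "real Lam * g l (eta - 1) \<le> real Lam * uniform_avg (ksubsets R l) (\<lambda>F. \<phi> (rank ` F))"
    by (intro mult_left_mono) auto
  also have "\<dots> \<le> uniform_avg (ksubsets R l) (\<lambda>F. real (max_gap (insert 0 (insert N F))))"
    unfolding uniform_avg_cmult[symmetric] \<phi>_def
    by (rule uniform_avg_mono)
      (use mult_max_gap_rank_le_max_gap \<open>eta \<ge> 2\<close> in \<open>auto simp: ksubsets_def simp flip: of_nat_mult\<close>)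
  finally show ?thesis .
qed

end

theorem proposition3p3:
  fixes N Lam eta lam S l :: nat
  assumes "Lam \<ge> 1" and "eta \<ge> 1" and "N = eta * Lam"
    and "lam \<in> {1..Lam}" and "S \<in> {1..N}"
    and "l \<le> card (drop_set Lam eta lam - {S})"
  shows "real Lam * g l (eta - 1) \<le> cond_exp_clg Lam eta lam S l
       \<and> cond_exp_clg Lam eta lam S l \<le> real Lam * g l (eta + 1)"
proof -
  define r where "r = (lam + (N - S)) mod Lam"
  have cond: "cond_exp_clg Lam eta lam S l = uniform_avg (ksubsets (residue_nodes N Lam r - {N}) l)
      (\<lambda>F. real (max_gap (insert 0 (insert N F))))"
    unfolding r_def using assms(2-5) by (rule cond_exp_clg_eq_uniform_avg_max_gap)
  show ?thesis
  proof (cases "r = 0")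
    case True
    hence "cond_exp_clg Lam eta lam S l = real Lam * g l eta"
      using cond uniform_avg_max_gap_residue_nodes_0[OF assms(1-3)] by simp
    thus ?thesis using g_mono[of "eta - 1" eta l] g_mono[of eta "eta + 1" l] by (simp add: mult_left_mono)
  next
    case False
    interpret nonzero_residue Lam eta N r
      using assms(1-3) False unfolding r_def by unfold_locales auto
    have "residue_nodes N Lam r - {N} = residue_nodes N Lam r" using residue_node_eq(4) by blast
    thus ?thesis using cond uniform_avg_max_gap_le_upper uniform_avg_max_gap_ge_lower by simp
  qed
qed

end
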